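(* Let $X$ be a compact metric space, $f:X\to X$ continuous and $x\in X$. If $\omega_f(x)$ is totally periodic and totally disconnected, then $\omega_f(x)$ is finite.
   Context: $\omega_f(x)=\{y\in X:\ \exists\, n_i\to+\infty,\ f^{n_i}(x)\to y\}$. It is totally periodic if every point $y\in\omega_f(x)$ satisfies $f^m(y)=y$ for some $m\ge1$. *)

theory Defs
  imports "HOL-Analysis.Analysis"
begin

definition omega_limit :: "'a::metric_space set \<Rightarrow> ('a \<Rightarrow> 'a) \<Rightarrow> 'a \<Rightarrow> 'a set" where
  "omega_limit X f x = {y \<in> X. \<exists>n :: nat \<Rightarrow> nat. filterlim n at_top sequentially \<and>
       ((\<lambda>i. (f ^^ n i) x) \<longlongrightarrow> y) sequentially}"

definition totally_periodic :: "('a \<Rightarrow> 'a) \<Rightarrow> 'a set \<Rightarrow> bool" where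
  "totally_periodic f S \<longleftrightarrow> (\<forall>y\<in>S. \<exists>m::nat. m \<ge> 1 \<and> (f ^^ m) y = y)"

definition totally_disconnected :: "'a::topological_space set \<Rightarrow> bool" where
  "totally_disconnected S \<longleftrightarrow> (\<forall>C. C \<subseteq> S \<and> connected C \<longrightarrow> (\<exists>a. C \<subseteq> {a}))"

end

theory Submission
  imports Defs
begin

text \<open>By Baire's theorem the compact set \<open>\<omega>\<close>, the countable union of the closed sets of points
  of period \<open>m\<close>, has a nonempty relatively open subset on which some \<open>f ^^ m\<close> is the identity;
  total disconnectedness shrinks it to a nonempty clopen \<open>V\<close>. Total periodicity makes \<open>f\<close> a
  homeomorphism of \<open>\<omega>\<close>, so \<open>V \<union> f ` V \<union> \<dots> \<union> f ^^ (m - 1) ` V\<close> is clopen and forward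
  invariant, and an \<open>\<omega>\<close>-limit set has no proper nonempty subset of that kind; hence \<open>f ^^ m\<close> fixes
  \<open>\<omega>\<close>. Repeating this with arbitrarily small clopen neighbourhoods of a point \<open>z \<in> \<omega>\<close> shows that
  \<open>z\<close> is a limit of the finite orbit of any fixed \<open>y \<in> \<omega>\<close>, so \<open>\<omega>\<close> is that orbit.\<close>

lemma frequently_near_iff_tendsto_along:
  fixes a :: "nat \<Rightarrow> 'a::metric_space"
  shows "(\<exists>n. filterlim n at_top sequentially \<and> ((\<lambda>i. a (n i)) \<longlongrightarrow> y) sequentially) \<longleftrightarrow>
    (\<forall>e>0. \<exists>\<^sub>F k in sequentially. dist (a k) y < e)"
proof
  assume "\<exists>n. filterlim n at_top sequentially \<and> ((\<lambda>i. a (n i)) \<longlongrightarrow> y) sequentially"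
  then obtain n where n: "filterlim n at_top sequentially"
    and lim: "((\<lambda>i. a (n i)) \<longlongrightarrow> y) sequentially"
    by blast
  show "\<forall>e>0. \<exists>\<^sub>F k in sequentially. dist (a k) y < e"
  proof (intro allI impI)
    fix e :: real
    assume "e > 0"
    show "\<exists>\<^sub>F k in sequentially. dist (a k) y < e"
      unfolding frequently_sequentially
    proof
      fix N
      have "\<forall>\<^sub>F i in sequentially. N \<le> n i \<and> dist (a (n i)) y < e"
        using n lim \<open>e > 0\<close> by (simp add: filterlim_at_top eventually_conj tendstoD)
      then obtain i where "N \<le> n i" "dist (a (n i)) y < e"
        using eventually_happens'[OF sequentially_bot] by blast
      then show "\<exists>k\<ge>N. dist (a k) y < e"
        by blast
    qed
  qed
next
  assume "\<forall>e>0. \<exists>\<^sub>F k in sequentially. dist (a k) y < e"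
  then have "\<forall>k. \<exists>n\<ge>k. dist (a n) y < inverse (real (Suc k))"
    by (simp add: frequently_sequentially)
  then obtain n where n_ge: "\<And>k. k \<le> n k"
    and n_near: "\<And>k. dist (a (n k)) y < inverse (real (Suc k))"
    by metis
  have "filterlim n at_top sequentially"
    by (rule filterlim_at_top_mono[OF filterlim_ident]) (simp add: n_ge)
  moreover have "((\<lambda>i. a (n i)) \<longlongrightarrow> y) sequentially"
  proof (rule tendsto_dist_iff[THEN iffD2],
      rule tendsto_sandwich[OF _ _ tendsto_const LIMSEQ_inverse_real_of_nat])
    show "\<forall>\<^sub>F i in sequentially. 0 \<le> dist (a (n i)) y"
      by simp
    show "\<forall>\<^sub>F i in sequentially. dist (a (n i)) y \<le> inverse (real (Suc i))"
      using n_near by (intro always_eventually allI less_imp_le)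
  qed
  ultimately show "\<exists>n. filterlim n at_top sequentially \<and> ((\<lambda>i. a (n i)) \<longlongrightarrow> y) sequentially"
    by blast
qed

lemma omega_limit_iff:
  "y \<in> omega_limit X f x \<longleftrightarrow> y \<in> X \<and> (\<forall>e>0. \<exists>\<^sub>F n in sequentially. dist ((f ^^ n) x) y < e)"
  unfolding omega_limit_def frequently_near_iff_tendsto_along[symmetric] by blast

lemma funpow_mult_fixed: "(f ^^ m) y = y \<Longrightarrow> (f ^^ (m * k)) y = y"
proof (induction k)
  case (Suc k)
  then show ?case by (simp add: funpow_add)
qed simp

lemma funpow_commute: "(f ^^ m) ((f ^^ k) y) = (f ^^ k) ((f ^^ m) y)"
  by (metis add.commute funpow_add comp_apply)

lemma funpow_image_subset: "f ` S \<subseteq> S \<Longrightarrow> (f ^^ n) ` S \<subseteq> S"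
  by (induction n) auto

lemma totally_periodic_bij_betw:
  assumes periodic: "totally_periodic f S" and into: "f ` S \<subseteq> S"
  shows "bij_betw f S S"
proof (rule bij_betw_imageI)
  show "inj_on f S"
  proof
    fix y z
    assume "y \<in> S" "z \<in> S" and "f y = f z"
    obtain m k where "m \<ge> 1" "(f ^^ m) y = y" "k \<ge> 1" "(f ^^ k) z = z"
      using periodic \<open>y \<in> S\<close> \<open>z \<in> S\<close> unfolding totally_periodic_def by blast
    moreover obtain q where "m * k = Suc q"
      using \<open>m \<ge> 1\<close> \<open>k \<ge> 1\<close> by (metis Suc_le_D One_nat_def one_le_mult_iff)
    ultimately have "(f ^^ Suc q) y = y" "(f ^^ Suc q) z = z"
      using funpow_mult_fixed[where f=f and m=m and k=k] funpow_mult_fixed[where f=f and m=k and k=m]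
      by (simp_all add: mult.commute)
    then show "y = z"
      using \<open>f y = f z\<close> by (metis funpow_swap1 funpow.simps(2) comp_apply)
  qed
  show "f ` S = S"
  proof
    show "S \<subseteq> f ` S"
    proof
      fix y
      assume "y \<in> S"
      then obtain m where "m \<ge> 1" "(f ^^ m) y = y"
        using periodic unfolding totally_periodic_def by blast
      then obtain q where "(f ^^ Suc q) y = y"
        by (metis Suc_le_D One_nat_def)
      moreover have "(f ^^ q) y \<in> S"
        using funpow_image_subset[OF into] \<open>y \<in> S\<close> by blast
      ultimately show "y \<in> f ` S"
        by (metis funpow.simps(2) comp_apply image_eqI)
    qed
  qed (rule into)
qed

lemma compact_closed_separated:
  fixes S T :: "'a::metric_space set"
  assumes "compact S" "closed T" "S \<inter> T = {}"
  obtains \<delta> where "\<delta> > 0" "\<And>p q. p \<in> S \<Longrightarrow> q \<in> T \<Longrightarrow> \<delta> \<le> dist p q"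
proof (cases "S = {} \<or> T = {}")
  case True
  then show ?thesis using that[of 1] by auto
next
  case False
  have "continuous_on S (\<lambda>p. infdist p T)"
    by (intro continuous_intros)
  then obtain p where "p \<in> S" and p_min: "\<And>q. q \<in> S \<Longrightarrow> infdist p T \<le> infdist q T"
    using continuous_attains_inf[OF \<open>compact S\<close>] False by blast
  have "infdist p T > 0"
    using \<open>p \<in> S\<close> assms(2,3) False in_closed_iff_infdist_zero[of T p] infdist_nonneg[of p T]
    by force
  moreover have "infdist p T \<le> dist q t" if "q \<in> S" "t \<in> T" for q t
    using p_min[OF \<open>q \<in> S\<close>] infdist_le[OF \<open>t \<in> T\<close>, of q] by linarith
  ultimately show ?thesis
    using that by blast
qed

lemma compact_Union_closed_interior:
  fixes S :: "'a::metric_space set"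
  assumes "compact S" "S \<noteq> {}" "\<And>n::nat. closed (F n)" "S \<subseteq> (\<Union>n. F n)"
  obtains n U where "openin (top_of_set S) U" "U \<noteq> {}" "U \<subseteq> F n"
proof (rule ccontr)
  assume no_interior: "\<not> thesis"
  let ?Y = "top_of_set S"
  have "compact_space ?Y" "Hausdorff_space ?Y"
    using \<open>compact S\<close> by (simp_all add: compact_space_subtopology compactin_euclidean_iff
        Hausdorff_space_subtopology)
  have "?Y interior_of \<Union>(range (\<lambda>n. S \<inter> F n)) = {}"
  proof (rule Baire_category_alt)
    show "completely_metrizable_space ?Y \<or> locally_compact_space ?Y \<and> regular_space ?Y"
      using \<open>compact_space ?Y\<close> \<open>Hausdorff_space ?Y\<close>
      by (simp add: compact_imp_locally_compact_space compact_Hausdorff_imp_regular_space)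
    show "countable (range (\<lambda>n. S \<inter> F n))"
      by simp
    fix T
    assume "T \<in> range (\<lambda>n. S \<inter> F n)"
    then obtain n where T: "T = S \<inter> F n" by blast
    have "?Y interior_of T = {}"
      using no_interior that[of "?Y interior_of T" n] interior_of_subset[of ?Y T] T by auto
    then show "closedin ?Y T \<and> ?Y interior_of T = {}"
      using T assms(3) by (simp add: closedin_closed_Int)
  qed
  moreover have "\<Union>(range (\<lambda>n. S \<inter> F n)) = S"
    using assms(4) by blast
  ultimately show False
    using \<open>S \<noteq> {}\<close> interior_of_topspace[of ?Y] by simp
qed

definition clopen_in :: "'a::topological_space set \<Rightarrow> 'a set \<Rightarrow> bool" where
  "clopen_in S V \<longleftrightarrow> V \<subseteq> S \<and> closed V \<and> closed (S - V)"

lemma clopen_in_UN: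
  assumes "closed S" "finite I" "\<And>i. i \<in> I \<Longrightarrow> clopen_in S (A i)"
  shows "clopen_in S (\<Union>i\<in>I. A i)"
proof -
  have "S - (\<Union>i\<in>I. A i) = S \<inter> (\<Inter>i\<in>I. S - A i)"
    by blast
  moreover have "closed (\<Inter>i\<in>I. S - A i)"
    using assms(3) unfolding clopen_in_def by (intro closed_INT) blast
  ultimately have "closed (S - (\<Union>i\<in>I. A i))"
    using assms(1) by (metis closed_Int)
  moreover have "closed (\<Union>i\<in>I. A i)"
    using assms(2,3) unfolding clopen_in_def by (simp add: closed_UN)
  ultimately show ?thesis
    using assms(3) unfolding clopen_in_def by blast
qed

lemma clopen_in_image:
  fixes f :: "'a::metric_space \<Rightarrow> 'a"
  assumes "compact S" "continuous_on S f" "bij_betw f S S" "clopen_in S V"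
  shows "clopen_in S (f ` V)"
proof -
  have closed_image: "closed (f ` W)" if "W \<subseteq> S" "closed W" for W
  proof -
    have "compact W"
      using that compact_Int_closed[OF \<open>compact S\<close>, of W] by (simp add: Int_absorb1)
    then show ?thesis
      using continuous_on_subset[OF assms(2) \<open>W \<subseteq> S\<close>]
      by (intro compact_imp_closed compact_continuous_image)
  qed
  have "S - f ` V = f ` (S - V)"
    using assms(3,4) inj_on_image_set_diff[of f S S V] unfolding clopen_in_def bij_betw_def by auto
  moreover have "f ` V \<subseteq> S"
    using assms(3,4) unfolding clopen_in_def bij_betw_def by blast
  ultimately show ?thesis
    using assms(4) closed_image unfolding clopen_in_def by auto
qed

lemma clopen_in_funpow_image:
  fixes f :: "'a::metric_space \<Rightarrow> 'a"
  assumes "compact S" "continuous_on S f" "bij_betw f S S" "clopen_in S V"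
  shows "clopen_in S ((f ^^ n) ` V)"
proof (induction n)
  case (Suc n)
  then show ?case
    using clopen_in_image[OF assms(1-3) Suc.IH] by (simp add: image_image)
qed (simp add: assms(4))

text \<open>In a compact Hausdorff space quasi-components are connected components, here singletons,
  so \<open>{y}\<close> can be separated from the compact set \<open>S - W\<close>.\<close>

lemma compact_totally_disconnected_clopen_nbhd:
  fixes S :: "'a::metric_space set"
  assumes "compact S" "totally_disconnected S" "y \<in> S" "open W" "y \<in> W"
  obtains V where "clopen_in S V" "y \<in> V" "V \<subseteq> W"
proof -
  let ?Y = "top_of_set S"
  have "compact_space ?Y" "Hausdorff_space ?Y"
    using \<open>compact S\<close> by (simp_all add: compact_space_subtopology compactin_euclidean_iff
        Hausdorff_space_subtopology)
  then have quasi_eq: "quasi_components_of ?Y = connected_components_of ?Y"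
    by (simp add: quasi_eq_connected_components_of)
  have "connected_component_of_set ?Y y = {y}"
  proof -
    have "connectedin ?Y (connected_component_of_set ?Y y)"
      by (rule connectedin_connected_component_of)
    then have "connected (connected_component_of_set ?Y y)" "connected_component_of_set ?Y y \<subseteq> S"
      by (simp_all add: connectedin_subtopology connectedin_iff_connected)
    then obtain a where "connected_component_of_set ?Y y \<subseteq> {a}"
      using \<open>totally_disconnected S\<close> unfolding totally_disconnected_def by blast
    moreover have "y \<in> connected_component_of_set ?Y y"
      using \<open>y \<in> S\<close> by (simp add: connected_component_of_refl)
    ultimately show ?thesis
      by blast
  qed
  then have "{y} \<in> quasi_components_of ?Y"
    using quasi_eq \<open>y \<in> S\<close> unfolding connected_components_of_def by auto
  moreover have "compactin ?Y (S - W)"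
    using compact_Int_closed[OF \<open>compact S\<close>, of "- W"] \<open>open W\<close>
    by (simp add: compactin_subtopology compactin_euclidean_iff Diff_eq open_closed)
  ultimately have "separated_between ?Y {y} (S - W)"
    using \<open>y \<in> W\<close> by (simp add: separated_between_quasi_component_compact)
  then obtain U U' where "openin ?Y U" "openin ?Y U'" "U \<union> U' = S" "disjnt U U'"
    and "y \<in> U" "S - W \<subseteq> U'"
    unfolding separated_between_def by auto
  then have "U = S - U'" "S - U = U'"
    unfolding disjnt_def by blast+
  then have "closedin ?Y U" "closedin ?Y (S - U)"
    using \<open>openin ?Y U\<close> \<open>openin ?Y U'\<close> by (simp_all add: openin_closedin_eq)
  then have "clopen_in S U"
    using closedin_closed_trans[OF _ compact_imp_closed[OF \<open>compact S\<close>]]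
    using \<open>U = S - U'\<close> unfolding clopen_in_def by blast
  moreover have "U \<subseteq> W"
    using \<open>U = S - U'\<close> \<open>S - W \<subseteq> U'\<close> by blast
  ultimately show ?thesis
    using that \<open>y \<in> U\<close> by blast
qed

locale compact_dynamical_system =
  fixes X :: "'a::metric_space set" and f :: "'a \<Rightarrow> 'a" and x :: 'a
  assumes compact: "compact X" and continuous: "continuous_on X f" and maps_into: "f ` X \<subseteq> X"
    and start: "x \<in> X"
begin

abbreviation \<omega> :: "'a set" where
  "\<omega> \<equiv> omega_limit X f x"

lemma orbit_in: "(f ^^ n) x \<in> X"
  using funpow_image_subset[OF maps_into] start by blast

lemma continuous_on_funpow: "continuous_on X (f ^^ n)"
proof (induction n)
  case (Suc n)
  then show ?case
    using funpow_image_subset[OF maps_into]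
    by (auto intro: continuous_on_compose2[OF continuous])
qed (simp add: continuous_on_id)

lemma omega_subset: "\<omega> \<subseteq> X"
  unfolding omega_limit_def by blast

lemma closed_omega: "closed \<omega>"
proof -
  have "y \<in> \<omega>" if "y \<in> closure \<omega>" for y
  proof -
    have "y \<in> X"
      using that closure_mono[OF omega_subset] closure_closed[OF compact_imp_closed[OF compact]]
      by blast
    moreover have "\<exists>\<^sub>F n in sequentially. dist ((f ^^ n) x) y < e" if "e > 0" for e
    proof -
      obtain z where "z \<in> \<omega>" "dist z y < e / 2"
        using \<open>y \<in> closure \<omega>\<close> \<open>e > 0\<close> unfolding closure_approachable by (meson half_gt_zero)
      then have "\<exists>\<^sub>F n in sequentially. dist ((f ^^ n) x) z < e / 2"
        using half_gt_zero[OF \<open>e > 0\<close>] unfolding omega_limit_iff by blast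
      then show ?thesis
      proof (rule frequently_elim1)
        fix n
        assume "dist ((f ^^ n) x) z < e / 2"
        then show "dist ((f ^^ n) x) y < e"
          using \<open>dist z y < e / 2\<close> dist_triangle[of "(f ^^ n) x" y z] by linarith
      qed
    qed
    ultimately show "y \<in> \<omega>"
      unfolding omega_limit_iff by blast
  qed
  then show ?thesis
    using closure_subset_eq by blast
qed

lemma compact_omega: "compact \<omega>"
  using compact_Int_closed[OF compact closed_omega] omega_subset by (simp add: Int_absorb1)

lemma omega_nonempty: "\<omega> \<noteq> {}"
proof -
  obtain l r where "l \<in> X" "strict_mono r" "((\<lambda>n. (f ^^ n) x) \<circ> r) \<longlonglongrightarrow> l"
    using seq_compactE[OF compact_imp_seq_compact[OF compact], of "\<lambda>n. (f ^^ n) x"] orbit_in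
    by blast
  then have "l \<in> \<omega>"
    unfolding omega_limit_def by (auto simp: o_def intro!: exI[of _ r] filterlim_subseq)
  then show ?thesis
    by blast
qed

lemma image_omega_subset: "f ` \<omega> \<subseteq> \<omega>"
proof
  fix z
  assume "z \<in> f ` \<omega>"
  then obtain y n where "z = f y" "y \<in> X" and n: "filterlim n at_top sequentially"
    and lim: "((\<lambda>i. (f ^^ n i) x) \<longlongrightarrow> y) sequentially"
    unfolding omega_limit_def by blast
  have "((\<lambda>i. (f ^^ Suc (n i)) x) \<longlongrightarrow> f y) sequentially"
    using continuous_on_tendsto_compose[OF continuous lim \<open>y \<in> X\<close>] orbit_in by simp
  moreover have "filterlim (\<lambda>i. Suc (n i)) at_top sequentially"
    using filterlim_compose[OF filterlim_Suc n] .
  ultimately show "z \<in> \<omega>"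
    unfolding omega_limit_def using \<open>z = f y\<close> \<open>y \<in> X\<close> maps_into by blast
qed

lemma omega_visited:
  assumes "y \<in> \<omega>" "e > 0"
  obtains n where "n \<ge> N" "dist ((f ^^ n) x) y < e"
proof -
  have "\<exists>\<^sub>F n in sequentially. dist ((f ^^ n) x) y < e"
    using assms unfolding omega_limit_iff by blast
  then show ?thesis
    using that unfolding frequently_sequentially by blast
qed

lemma eventually_close_to_omega:
  assumes "\<rho> > 0"
  shows "\<forall>\<^sub>F n in sequentially. \<exists>w\<in>\<omega>. dist ((f ^^ n) x) w < \<rho>"
proof (rule ccontr)
  assume "\<not> ?thesis"
  then obtain r :: "nat \<Rightarrow> nat" where "strict_mono r"
    and far: "\<And>n. \<not> (\<exists>w\<in>\<omega>. dist ((f ^^ r n) x) w < \<rho>)"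
    using not_eventually_sequentiallyD by blast
  obtain l s where "l \<in> X" "strict_mono s" and lim: "((\<lambda>n. (f ^^ r n) x) \<circ> s) \<longlonglongrightarrow> l"
    using seq_compactE[OF compact_imp_seq_compact[OF compact], of "\<lambda>n. (f ^^ r n) x"] orbit_in
    by blast
  have "l \<in> \<omega>"
    using \<open>l \<in> X\<close> lim filterlim_subseq[OF strict_mono_o[OF \<open>strict_mono r\<close> \<open>strict_mono s\<close>]]
    unfolding omega_limit_def by (auto simp: o_def)
  moreover obtain i where "dist ((f ^^ r (s i)) x) l < \<rho>"
    using eventually_happens'[OF sequentially_bot tendstoD[OF lim assms]] by auto
  ultimately show False
    using far by blast
qed

text \<open>Near \<open>\<omega>\<close> the orbit can move from \<open>V\<close> to \<open>\<omega> - V\<close> only by a jump across the gap between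
  them, and uniform continuity makes its steps shorter than that gap.\<close>

lemma invariant_clopen_traps_orbit:
  assumes V: "clopen_in \<omega> V" "f ` V \<subseteq> V"
  obtains \<rho> N where "\<rho> > 0" "\<And>p q. p \<in> V \<Longrightarrow> q \<in> \<omega> - V \<Longrightarrow> 2 * \<rho> \<le> dist p q"
    "\<And>n. n \<ge> N \<Longrightarrow> \<exists>w\<in>V. dist ((f ^^ n) x) w < \<rho> \<Longrightarrow> \<exists>w\<in>V. dist ((f ^^ Suc n) x) w < \<rho>"
proof -
  have "compact V"
    using V(1) compact_Int_closed[OF compact_omega] unfolding clopen_in_def by (metis Int_absorb1)
  then obtain \<delta> where "\<delta> > 0" and gap: "\<And>p q. p \<in> V \<Longrightarrow> q \<in> \<omega> - V \<Longrightarrow> \<delta> \<le> dist p q"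
    using compact_closed_separated[of V "\<omega> - V"] V(1) unfolding clopen_in_def by blast
  obtain \<eta> where "\<eta> > 0"
    and step: "\<forall>q\<in>X. \<forall>p\<in>X. dist p q < \<eta> \<longrightarrow> dist (f p) (f q) < \<delta> / 2"
    using compact_uniformly_continuous[OF continuous compact] half_gt_zero[OF \<open>\<delta> > 0\<close>]
    unfolding uniformly_continuous_on_def by blast
  define \<rho> where "\<rho> = min \<eta> (\<delta> / 2)"
  have "\<rho> > 0"
    using \<open>\<eta> > 0\<close> \<open>\<delta> > 0\<close> by (simp add: \<rho>_def)
  obtain N where shadow: "\<And>n. n \<ge> N \<Longrightarrow> \<exists>w\<in>\<omega>. dist ((f ^^ n) x) w < \<rho>"
    using eventually_close_to_omega[OF \<open>\<rho> > 0\<close>] unfolding eventually_sequentially by blast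
  have "\<exists>w'\<in>V. dist ((f ^^ Suc n) x) w' < \<rho>"
    if "n \<ge> N" "w \<in> V" "dist ((f ^^ n) x) w < \<rho>" for n w
  proof -
    have "w \<in> X"
      using \<open>w \<in> V\<close> V(1) omega_subset unfolding clopen_in_def by blast
    then have "dist ((f ^^ Suc n) x) (f w) < \<delta> / 2"
      using that(3) step orbit_in by (simp add: \<rho>_def)
    moreover obtain w' where "w' \<in> \<omega>" "dist ((f ^^ Suc n) x) w' < \<rho>"
      using shadow[of "Suc n"] \<open>n \<ge> N\<close> by auto
    moreover have "f w \<in> V"
      using \<open>w \<in> V\<close> V(2) by blast
    ultimately have "w' \<in> V"
      using gap[of "f w" w'] dist_triangle3[of "f w" w' "(f ^^ Suc n) x"]
      by (force simp: \<rho>_def)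
    then show ?thesis
      using \<open>dist ((f ^^ Suc n) x) w' < \<rho>\<close> by blast
  qed
  moreover have "2 * \<rho> \<le> dist p q" if "p \<in> V" "q \<in> \<omega> - V" for p q
    using gap[OF that] by (simp add: \<rho>_def)
  ultimately show ?thesis
    using that \<open>\<rho> > 0\<close> by blast
qed

lemma clopen_invariant_eq_omega:
  assumes V: "clopen_in \<omega> V" "V \<noteq> {}" "f ` V \<subseteq> V"
  shows "V = \<omega>"
proof (rule ccontr)
  assume "V \<noteq> \<omega>"
  then obtain z where "z \<in> \<omega>" "z \<notin> V"
    using V(1) unfolding clopen_in_def by blast
  obtain v where "v \<in> V"
    using V(2) by blast
  obtain \<rho> N where "\<rho> > 0" and gap: "\<And>p q. p \<in> V \<Longrightarrow> q \<in> \<omega> - V \<Longrightarrow> 2 * \<rho> \<le> dist p q"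
    and trap: "\<And>n. n \<ge> N \<Longrightarrow> \<exists>w\<in>V. dist ((f ^^ n) x) w < \<rho> \<Longrightarrow>
      \<exists>w\<in>V. dist ((f ^^ Suc n) x) w < \<rho>"
    using invariant_clopen_traps_orbit[OF V(1,3)] by metis
  obtain n\<^sub>0 where "n\<^sub>0 \<ge> N" "dist ((f ^^ n\<^sub>0) x) v < \<rho>"
    using omega_visited \<open>v \<in> V\<close> V(1) \<open>\<rho> > 0\<close> unfolding clopen_in_def by blast
  have trapped: "\<exists>w\<in>V. dist ((f ^^ (n\<^sub>0 + k)) x) w < \<rho>" for k
  proof (induction k)
    case 0
    show ?case
      using \<open>v \<in> V\<close> \<open>dist ((f ^^ n\<^sub>0) x) v < \<rho>\<close> by auto
  next
    case (Suc k)
    then show ?case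
      using trap[of "n\<^sub>0 + k"] \<open>n\<^sub>0 \<ge> N\<close> by simp
  qed
  obtain n where "n \<ge> n\<^sub>0" "dist ((f ^^ n) x) z < \<rho>"
    using omega_visited \<open>z \<in> \<omega>\<close> \<open>\<rho> > 0\<close> by blast
  moreover obtain w where "w \<in> V" "dist ((f ^^ n) x) w < \<rho>"
    using trapped[of "n - n\<^sub>0"] \<open>n \<ge> n\<^sub>0\<close> by auto
  ultimately show False
    using gap[of w z] \<open>z \<in> \<omega>\<close> \<open>z \<notin> V\<close> dist_triangle3[of w z "(f ^^ n) x"] by simp
qed

lemma orbit_union_eq_omega:
  assumes periodic: "totally_periodic f \<omega>" and V: "clopen_in \<omega> V" "V \<noteq> {}"
    and "m \<ge> 1" and fixed: "\<And>v. v \<in> V \<Longrightarrow> (f ^^ m) v = v"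
  shows "(\<Union>k<m. (f ^^ k) ` V) = \<omega>"
proof (rule clopen_invariant_eq_omega)
  have "continuous_on \<omega> f"
    using continuous omega_subset by (rule continuous_on_subset)
  then have "clopen_in \<omega> ((f ^^ k) ` V)" for k
    using totally_periodic_bij_betw[OF periodic image_omega_subset]
    by (intro clopen_in_funpow_image compact_omega V(1))
  then show "clopen_in \<omega> (\<Union>k<m. (f ^^ k) ` V)"
    by (intro clopen_in_UN closed_omega finite_lessThan)
  have "(f ^^ 0) ` V \<subseteq> (\<Union>k<m. (f ^^ k) ` V)"
    using \<open>m \<ge> 1\<close> by (intro UN_upper) simp
  then show "(\<Union>k<m. (f ^^ k) ` V) \<noteq> {}"
    using V(2) by auto
  show "f ` (\<Union>k<m. (f ^^ k) ` V) \<subseteq> (\<Union>k<m. (f ^^ k) ` V)"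
  proof clarify
    fix k v
    assume "k < m" "v \<in> V"
    show "f ((f ^^ k) v) \<in> (\<Union>k<m. (f ^^ k) ` V)"
    proof (cases "Suc k = m")
      case True
      then have "f ((f ^^ k) v) = (f ^^ 0) v"
        using fixed[OF \<open>v \<in> V\<close>] by (simp add: True[symmetric])
      then show ?thesis
        using \<open>v \<in> V\<close> \<open>m \<ge> 1\<close> by (intro UN_I[of 0]) auto
    next
      case False
      then show ?thesis
        using \<open>k < m\<close> \<open>v \<in> V\<close> by (auto intro!: bexI[of _ "Suc k"])
    qed
  qed
qed

lemma periodic_on_open_subset:
  assumes "totally_periodic f \<omega>"
  obtains m U where "m \<ge> 1" "openin (top_of_set \<omega>) U" "U \<noteq> {}"
    "\<And>u. u \<in> U \<Longrightarrow> (f ^^ m) u = u"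
proof -
  define F where "F n = {y \<in> X. (f ^^ Suc n) y = y}" for n
  have "closed (F n)" for n
  proof -
    have "continuous_on X (\<lambda>y. dist ((f ^^ Suc n) y) y)"
      by (intro continuous_on_dist continuous_on_funpow continuous_on_id)
    then have "closed {y \<in> X. dist ((f ^^ Suc n) y) y = 0}"
      using compact_imp_closed[OF compact] by (rule continuous_closed_preimage_constant)
    then show ?thesis
      unfolding F_def by simp
  qed
  moreover have "\<omega> \<subseteq> (\<Union>n. F n)"
  proof
    fix y
    assume "y \<in> \<omega>"
    then obtain m where "m \<ge> 1" "(f ^^ m) y = y"
      using assms unfolding totally_periodic_def by blast
    then obtain n where "(f ^^ Suc n) y = y"
      by (metis Suc_le_D One_nat_def)
    then show "y \<in> (\<Union>n. F n)"
      using \<open>y \<in> \<omega>\<close> omega_subset unfolding F_def by blast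
  qed
  ultimately obtain n U where "openin (top_of_set \<omega>) U" "U \<noteq> {}" "U \<subseteq> F n"
    by (rule compact_Union_closed_interior[OF compact_omega omega_nonempty])
  moreover have "(f ^^ Suc n) u = u" if "u \<in> U" for u
    using that \<open>U \<subseteq> F n\<close> unfolding F_def by blast
  ultimately show ?thesis
    using that[of "Suc n" U] by simp
qed

lemma omega_periodic:
  assumes "totally_periodic f \<omega>" "totally_disconnected \<omega>"
  obtains m where "m \<ge> 1" "\<And>w. w \<in> \<omega> \<Longrightarrow> (f ^^ m) w = w"
proof -
  obtain m U where "m \<ge> 1" "openin (top_of_set \<omega>) U" "U \<noteq> {}"
    and fixed: "\<And>u. u \<in> U \<Longrightarrow> (f ^^ m) u = u"
    using periodic_on_open_subset[OF assms(1)] by metis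
  obtain T where "open T" "U = \<omega> \<inter> T"
    using \<open>openin (top_of_set \<omega>) U\<close> unfolding openin_open by blast
  obtain y where "y \<in> \<omega>" "y \<in> T"
    using \<open>U \<noteq> {}\<close> \<open>U = \<omega> \<inter> T\<close> by blast
  then obtain V where V: "clopen_in \<omega> V" "y \<in> V" "V \<subseteq> T"
    by (rule compact_totally_disconnected_clopen_nbhd[OF compact_omega assms(2) _ \<open>open T\<close>])
  have fixed_V: "(f ^^ m) v = v" if "v \<in> V" for v
    using that V \<open>U = \<omega> \<inter> T\<close> fixed unfolding clopen_in_def by blast
  have cover: "(\<Union>k<m. (f ^^ k) ` V) = \<omega>"
    using V(2) by (intro orbit_union_eq_omega[OF assms(1) V(1) _ \<open>m \<ge> 1\<close> fixed_V]) auto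
  have "(f ^^ m) w = w" if "w \<in> \<omega>" for w
  proof -
    obtain k v where "v \<in> V" "w = (f ^^ k) v"
      using cover \<open>w \<in> \<omega>\<close> by blast
    then show ?thesis
      using fixed_V funpow_commute[of m f k v] by simp
  qed
  then show ?thesis
    using that \<open>m \<ge> 1\<close> by blast
qed

theorem finite_omega:
  assumes "totally_periodic f \<omega>" "totally_disconnected \<omega>"
  shows "finite \<omega>"
proof -
  obtain m where "m \<ge> 1" and fixed: "\<And>w. w \<in> \<omega> \<Longrightarrow> (f ^^ m) w = w"
    using omega_periodic[OF assms] by blast
  obtain y where "y \<in> \<omega>"
    using omega_nonempty by blast
  define orbit where "orbit = (\<lambda>k. (f ^^ k) y) ` {..m}"
  have "\<omega> \<subseteq> closure orbit"
  proof
    fix z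
    assume "z \<in> \<omega>"
    show "z \<in> closure orbit"
      unfolding closure_approachable
    proof (intro allI impI)
      fix d :: real
      assume "d > 0"
      then have "z \<in> ball z d"
        by simp
      then obtain V where V: "clopen_in \<omega> V" "z \<in> V" "V \<subseteq> ball z d"
        by (rule compact_totally_disconnected_clopen_nbhd[OF compact_omega assms(2) \<open>z \<in> \<omega>\<close> open_ball])
      moreover have "(f ^^ m) v = v" if "v \<in> V" for v
        using that V(1) fixed unfolding clopen_in_def by blast
      ultimately have "(\<Union>k<m. (f ^^ k) ` V) = \<omega>"
        by (intro orbit_union_eq_omega[OF assms(1) V(1) _ \<open>m \<ge> 1\<close>]) auto
      then obtain k v where "k < m" "v \<in> V" "y = (f ^^ k) v"
        using \<open>y \<in> \<omega>\<close> by blast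
      have "(f ^^ (m - k)) y = (f ^^ (m - k + k)) v"
        using \<open>y = (f ^^ k) v\<close> by (simp add: funpow_add)
      also have "\<dots> = v"
        using \<open>k < m\<close> \<open>v \<in> V\<close> V(1) fixed unfolding clopen_in_def by auto
      finally have "v \<in> orbit"
        unfolding orbit_def using \<open>k < m\<close> by (metis atMost_iff diff_le_self image_eqI)
      then show "\<exists>p\<in>orbit. dist p z < d"
        using \<open>v \<in> V\<close> V(3) by (metis dist_commute mem_ball subsetD)
    qed
  qed
  moreover have "finite orbit"
    unfolding orbit_def by simp
  ultimately show ?thesis
    using closure_closed[OF finite_imp_closed] by (metis finite_subset)
qed

end

theorem lemma2p5:
  fixes X :: "'a::metric_space set" and f :: "'a \<Rightarrow> 'a" and x :: 'a
  assumes "compact X"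
    and "continuous_on X f"
    and "f ` X \<subseteq> X"
    and "x \<in> X"
    and "totally_periodic f (omega_limit X f x)"
    and "totally_disconnected (omega_limit X f x)"
  shows "finite (omega_limit X f x)"
proof -
  interpret compact_dynamical_system X f x
    using assms(1-4) by unfold_locales
  show ?thesis
    using finite_omega assms(5,6) .
qed

end
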